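(* Let $G$ be a torsionless abelian group that binds some subgroup of infinite rank. Then there is a surjective homomorphism from $G$ onto a subgroup $G'$ of $\mathbb{Z}^{\omega}$ such that the subgroup $G'+\mathbb{Z}^{(\omega)}$ of $\mathbb{Z}^\omega$ binds $\mathbb{Z}^{(\omega)}$.
   Context: All groups are abelian. $\mathbb{Z}^{\omega}$ is the product of countably many copies of $\mathbb{Z}$, and $\mathbb{Z}^{(\omega)}\subseteq\mathbb{Z}^\omega$ is the subgroup of sequences with only finitely many nonzero entries. A group is torsionless if it embeds in $\mathbb{Z}^I$ for some set $I$. Rank means torsion-free rank. A group $G$ binds a subgroup $H$ if every homomorphism from $G$ to a free abelian group maps $H$ into a group of finite rank. *)

theory Defs
  imports "HOL-Algebra.Algebra"
begin

text \<open>Abelian groups are HOL-Algebra commutative groups (written multiplicatively).\<close>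

definition Zprod :: "'x set \<Rightarrow> ('x \<Rightarrow> int) monoid" where
  "Zprod I = \<lparr> carrier = {f. \<forall>i. i \<notin> I \<longrightarrow> f i = 0},
              monoid.mult = (\<lambda>f g i. f i + g i), monoid.one = (\<lambda>i. 0) \<rparr>"

definition Zfree :: "'x set \<Rightarrow> ('x \<Rightarrow> int) monoid" where
  "Zfree J = \<lparr> carrier = {f. finite {i. f i \<noteq> 0} \<and> (\<forall>i. i \<notin> J \<longrightarrow> f i = 0)},
              monoid.mult = (\<lambda>f g i. f i + g i), monoid.one = (\<lambda>i. 0) \<rparr>"

abbreviation Zomega :: "(nat \<Rightarrow> int) monoid" where
  "Zomega \<equiv> Zprod (UNIV :: nat set)"

abbreviation Zomega_fin :: "(nat \<Rightarrow> int) set" where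
  "Zomega_fin \<equiv> carrier (Zfree (UNIV :: nat set))"

text \<open>Torsionless: embeds into some Z^I (an index set of size at most |G| always suffices).\<close>
definition torsionless :: "('a, 'b) monoid_scheme \<Rightarrow> bool" where
  "torsionless G \<longleftrightarrow> (\<exists>(I :: 'a set) h. h \<in> hom G (Zprod I) \<and> inj_on h (carrier G))"

definition lin_indep :: "('a, 'b) monoid_scheme \<Rightarrow> 'a set \<Rightarrow> bool" where
  "lin_indep G S \<longleftrightarrow> S \<subseteq> carrier G \<and>
     (\<forall>c :: 'a \<Rightarrow> int. finprod G (\<lambda>s. pow G s (c s)) S = one G \<longrightarrow> (\<forall>s\<in>S. c s = 0))"

definition finite_rank :: "('a, 'b) monoid_scheme \<Rightarrow> 'a set \<Rightarrow> bool" where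
  "finite_rank G Y \<longleftrightarrow> (\<exists>n::nat. \<forall>S. S \<subseteq> Y \<and> finite S \<and> lin_indep G S \<longrightarrow> card S \<le> n)"

text \<open>Free abelian groups are represented as Z^(J); basis sets J of the element type
  of G suffice, since the image of G is free of rank at most |G|.\<close>
definition binds :: "('a, 'b) monoid_scheme \<Rightarrow> 'a set \<Rightarrow> bool" where
  "binds G H \<longleftrightarrow> (\<forall>(J :: 'a set) h. h \<in> hom G (Zfree J) \<longrightarrow> finite_rank (Zfree J) (h ` H))"

end

theory Submission
  imports Defs "HOL-Library.Countable_Set"
begin

(*
  Embed G into Z^I by e. Then e(H) is a Z-submodule of infinite rank, and so is its intersection
  with the kernels of finitely many linear functionals. This allows a recursive construction of
  x_k in e(H) and linear functionals F_k on Z^I with F_k(x_k) ~= 0 and F_k(x_j) = 0 for j ~= k.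
  The map f g = (F_n(e g))_n has the property that every finite subset of Z^(omega) has a common
  nonzero multiple D such that D z lies in f(H) for each of its elements z.
  Let phi map G' + Z^(omega), where G' = f(G), to a free abelian group. Since Z^(omega) is
  countable, phi(Z^(omega)) is supported on countably many basis elements, and these can be
  relabelled inside the infinite element type of G. As G binds H, the image of H under the
  resulting homomorphism on G has finite rank; it contains multiples of all relabelled elements of
  phi(Z^(omega)), so phi(Z^(omega)) has finite rank as well.
*)

section \<open>Integer linear algebra on functions\<close>

definition int_indep_on :: "'t set \<Rightarrow> ('t \<Rightarrow> 'x \<Rightarrow> int) \<Rightarrow> bool" where
  "int_indep_on T g \<longleftrightarrow> (\<forall>c. (\<lambda>i. \<Sum>t\<in>T. c t * g t i) = (\<lambda>i. 0) \<longrightarrow> (\<forall>t\<in>T. c t = 0))"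

abbreviation int_independent :: "('x \<Rightarrow> int) set \<Rightarrow> bool" where
  "int_independent S \<equiv> int_indep_on S (\<lambda>s. s)"

definition int_finite_rank :: "('x \<Rightarrow> int) set \<Rightarrow> bool" where
  "int_finite_rank Y \<longleftrightarrow> (\<exists>N. \<forall>S. S \<subseteq> Y \<and> finite S \<and> int_independent S \<longrightarrow> card S \<le> N)"

definition int_submodule :: "('x \<Rightarrow> int) set \<Rightarrow> bool" where
  "int_submodule B \<longleftrightarrow> (\<lambda>i. 0) \<in> B \<and> (\<forall>u\<in>B. \<forall>v\<in>B. \<forall>a b. (\<lambda>i. a * u i + b * v i) \<in> B)"

definition int_linear :: "(('x \<Rightarrow> int) \<Rightarrow> int) \<Rightarrow> bool" where
  "int_linear F \<longleftrightarrow> (\<forall>a b u v. F (\<lambda>i. a * u i + b * v i) = a * F u + b * F v)"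

lemma int_indep_onD: "int_indep_on T g \<Longrightarrow> (\<lambda>i. \<Sum>t\<in>T. c t * g t i) = (\<lambda>i. 0) \<Longrightarrow> t \<in> T \<Longrightarrow> c t = 0"
  unfolding int_indep_on_def by blast

lemma int_indep_on_image:
  assumes "finite T" "int_indep_on T g"
  shows "int_independent (g ` T)" "card (g ` T) = card T"
proof -
  have inj: "inj_on g T"
  proof (rule inj_onI, rule ccontr)
    fix t t' assume tt: "t \<in> T" "t' \<in> T" "g t = g t'" "t \<noteq> t'"
    define c where "c s = (if s = t then 1 else if s = t' then -1 else (0::int))" for s
    have "(\<Sum>s\<in>T. c s * g s i) = (\<Sum>s\<in>{t, t'}. c s * g s i)" for i
      by (rule sum.mono_neutral_right) (use assms tt in \<open>auto simp: c_def\<close>)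
    then have "(\<lambda>i. \<Sum>s\<in>T. c s * g s i) = (\<lambda>i. 0)"
      using tt by (auto simp: c_def)
    then have "c t = 0" by (rule int_indep_onD[OF assms(2) _ tt(1)])
    then show False by (simp add: c_def)
  qed
  then show "card (g ` T) = card T" by (rule card_image)
  show "int_independent (g ` T)"
    unfolding int_indep_on_def
  proof (intro allI impI ballI)
    fix c s assume "(\<lambda>i. \<Sum>u\<in>g ` T. c u * u i) = (\<lambda>i. 0)" and s: "s \<in> g ` T"
    then have "(\<lambda>i. \<Sum>t\<in>T. (c \<circ> g) t * g t i) = (\<lambda>i. 0)"
      by (simp add: sum.reindex[OF inj])
    then show "c s = 0" using assms(2) s by (auto dest: int_indep_onD)
  qed
qed

lemma int_independent_insertD:
  assumes "int_independent (insert s T)" "finite T" "s \<notin> T"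
    and "(\<lambda>i. a * s i + (\<Sum>t\<in>T. c t * t i)) = (\<lambda>i. 0)"
  shows "a = 0" "\<forall>t\<in>T. c t = 0"
proof -
  define c' where "c' = c(s := a)"
  have "(\<Sum>t\<in>T. c' t * t i) = (\<Sum>t\<in>T. c t * t i)" for i
    using assms(3) by (intro sum.cong) (auto simp: c'_def)
  then have "(\<lambda>i. \<Sum>t\<in>insert s T. c' t * t i) = (\<lambda>i. a * s i + (\<Sum>t\<in>T. c t * t i))"
    using assms(2,3) by (simp add: c'_def)
  then have "\<forall>t\<in>insert s T. c' t = 0"
    using assms(1,4) by (auto dest: int_indep_onD)
  then show "a = 0" "\<forall>t\<in>T. c t = 0"
    using assms(3) by (auto simp: c'_def split: if_splits)
qed

lemma zero_notin_int_independent: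
  assumes "int_independent S" "finite S"
  shows "(\<lambda>i. 0) \<notin> S"
proof
  assume "(\<lambda>i. 0) \<in> S"
  then have "int_independent (insert (\<lambda>i. 0) (S - {\<lambda>i. 0}))"
    using assms(1) by (simp add: insert_absorb)
  from int_independent_insertD(1)[OF this, of 1 "\<lambda>_. 0"] assms(2) show False by simp
qed

lemma int_linearD: "int_linear F \<Longrightarrow> F (\<lambda>i. a * u i + b * v i) = a * F u + b * F v"
  unfolding int_linear_def by blast

lemma int_linear_zero: "int_linear F \<Longrightarrow> F (\<lambda>i. 0) = 0"
  using int_linearD[of F 0 "\<lambda>i. 0" 0 "\<lambda>i. 0"] by simp

lemma int_linear_sum:
  assumes "int_linear F"
  shows "F (\<lambda>i. \<Sum>t\<in>T. c t * g t i) = (\<Sum>t\<in>T. c t * F (g t))"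
proof (induction T rule: infinite_finite_induct)
  case (insert a T)
  have "F (\<lambda>i. c a * g a i + 1 * (\<Sum>t\<in>T. c t * g t i)) = c a * F (g a) + 1 * F (\<lambda>i. \<Sum>t\<in>T. c t * g t i)"
    by (rule int_linearD[OF assms])
  with insert show ?case by simp
qed (simp_all add: int_linear_zero[OF assms])

lemma int_linear_coordinate: "int_linear (\<lambda>u. u i)"
  unfolding int_linear_def by simp

lemma int_linear_combination: "int_linear F \<Longrightarrow> int_linear G \<Longrightarrow> int_linear (\<lambda>u. a * F u - b * G u)"
  unfolding int_linear_def by (simp add: algebra_simps)

lemma int_submoduleD: "int_submodule B \<Longrightarrow> u \<in> B \<Longrightarrow> v \<in> B \<Longrightarrow> (\<lambda>i. a * u i + b * v i) \<in> B"
  unfolding int_submodule_def by blast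

lemma int_submodule_zero: "int_submodule B \<Longrightarrow> (\<lambda>i. 0) \<in> B"
  unfolding int_submodule_def by blast

lemma int_submodule_sum:
  assumes "int_submodule B" "g ` T \<subseteq> B"
  shows "(\<lambda>i. \<Sum>t\<in>T. c t * g t i) \<in> B"
  using assms(2)
proof (induction T rule: infinite_finite_induct)
  case (insert a T)
  then have "(\<lambda>i. c a * g a i + 1 * (\<Sum>t\<in>T. c t * g t i)) \<in> B"
    by (intro int_submoduleD[OF assms(1)]) auto
  with insert show ?case by simp
qed (simp_all add: int_submodule_zero[OF assms(1)])

lemma int_submodule_kernel:
  assumes "int_submodule B" "int_linear F"
  shows "int_submodule (B \<inter> {v. F v = 0})"
  using assms int_linear_zero[OF assms(2)] unfolding int_submodule_def by (simp add: int_linearD)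

lemma int_indep_on_projection:
  assumes S: "int_independent (insert s T)" "finite T" "s \<notin> T" and Fs: "F s \<noteq> 0"
  shows "int_indep_on T (\<lambda>t i. F s * t i - F t * s i)"
  unfolding int_indep_on_def
proof (intro allI impI ballI)
  fix c t assume comb: "(\<lambda>i. \<Sum>t\<in>T. c t * (F s * t i - F t * s i)) = (\<lambda>i. 0)" and t: "t \<in> T"
  have "(- (\<Sum>t\<in>T. c t * F t)) * s i + (\<Sum>t\<in>T. (c t * F s) * t i) = (\<Sum>t\<in>T. c t * (F s * t i - F t * s i))"
    for i by (simp add: right_diff_distrib sum_subtractf sum_distrib_right sum_negf mult.assoc)
  with comb have "(\<lambda>i. (- (\<Sum>t\<in>T. c t * F t)) * s i + (\<Sum>t\<in>T. (c t * F s) * t i)) = (\<lambda>i. 0)"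
    by simp
  from int_independent_insertD(2)[OF S this] t have "c t * F s = 0" by blast
  then show "c t = 0" using Fs by simp
qed

lemma not_int_finite_rank_kernel:
  assumes B: "int_submodule B" and F: "int_linear F" and inf: "\<not> int_finite_rank B"
  shows "\<not> int_finite_rank (B \<inter> {v. F v = 0})"
proof
  assume "int_finite_rank (B \<inter> {v. F v = 0})"
  then obtain N where N: "\<And>S. S \<subseteq> B \<inter> {v. F v = 0} \<Longrightarrow> finite S \<Longrightarrow> int_independent S \<Longrightarrow> card S \<le> N"
    unfolding int_finite_rank_def by blast
  have "card S \<le> Suc N" if S: "S \<subseteq> B" "finite S" "int_independent S" for S
  proof (cases "\<forall>s\<in>S. F s = 0")
    case True
    then show ?thesis using N[of S] S by fastforce
  next
    case False
    then obtain s where s: "s \<in> S" "F s \<noteq> 0" by blast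
    define T where "T = S - {s}"
    define g where "g t = (\<lambda>i. F s * t i - F t * s i)" for t
    have T: "finite T" "s \<notin> T" "S = insert s T"
      using S(2) s(1) by (auto simp: T_def)
    have "g t \<in> B \<inter> {v. F v = 0}" if "t \<in> T" for t
    proof
      have "(\<lambda>i. F s * t i + (- F t) * s i) \<in> B"
        using S(1) s(1) that by (intro int_submoduleD[OF B]) (auto simp: T_def)
      then show "g t \<in> B" by (simp add: g_def)
      show "g t \<in> {v. F v = 0}" using int_linearD[OF F, of "F s" t "- F t" s] by (simp add: g_def)
    qed
    then have "g ` T \<subseteq> B \<inter> {v. F v = 0}" by blast
    moreover have indep: "int_indep_on T g"
      unfolding g_def using int_indep_on_projection S(3) T s(2) by simp
    ultimately have "card (g ` T) \<le> N"
      using N[of "g ` T"] int_indep_on_image(1)[OF T(1) indep] T(1) by blast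
    then show ?thesis using int_indep_on_image(2)[OF T(1) indep] T by simp
  qed
  then show False using inf unfolding int_finite_rank_def by blast
qed

lemma not_int_finite_rank_kernels:
  fixes n :: nat
  assumes "int_submodule B" "\<forall>k<n. int_linear (F k)" "\<not> int_finite_rank B"
  shows "int_submodule (B \<inter> {v. \<forall>k<n. F k v = 0}) \<and> \<not> int_finite_rank (B \<inter> {v. \<forall>k<n. F k v = 0})"
  using assms(2)
proof (induction n)
  case (Suc n)
  have "B \<inter> {v. \<forall>k<Suc n. F k v = 0} = (B \<inter> {v. \<forall>k<n. F k v = 0}) \<inter> {v. F n v = 0}"
    by (auto simp: less_Suc_eq)
  moreover have Fn: "int_linear (F n)" using Suc.prems by simp
  ultimately show ?case
    using Suc int_submodule_kernel[OF _ Fn] not_int_finite_rank_kernel[OF _ Fn] by simp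
qed (use assms in simp)

lemma not_int_finite_rank_nonzero:
  assumes "\<not> int_finite_rank B"
  obtains v i where "v \<in> B" "v i \<noteq> 0"
proof -
  obtain S where S: "S \<subseteq> B" "finite S" "int_independent S" "card S > 0"
    using assms unfolding int_finite_rank_def by (metis not_le)
  then obtain v where "v \<in> S" by fastforce
  moreover have "v \<noteq> (\<lambda>i. 0)"
    using zero_notin_int_independent[OF S(3,2)] \<open>v \<in> S\<close> by blast
  ultimately show ?thesis using S(1) that by blast
qed

lemma int_finite_rank_multiples:
  assumes Y: "int_finite_rank Y"
    and multiples: "\<And>S. finite S \<Longrightarrow> S \<subseteq> A \<Longrightarrow> \<exists>D\<noteq>0. \<forall>s\<in>S. (\<lambda>i. D * s i) \<in> Y"
  shows "int_finite_rank A"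
proof -
  obtain N where N: "\<And>S. S \<subseteq> Y \<Longrightarrow> finite S \<Longrightarrow> int_independent S \<Longrightarrow> card S \<le> N"
    using Y unfolding int_finite_rank_def by blast
  have "card S \<le> N" if S: "S \<subseteq> A" "finite S" "int_independent S" for S
  proof -
    obtain D where D: "D \<noteq> 0" "\<forall>s\<in>S. (\<lambda>i. D * s i) \<in> Y"
      using multiples S by blast
    have indep: "int_indep_on S (\<lambda>s i. D * s i)"
      unfolding int_indep_on_def
    proof (intro allI impI)
      fix c assume "(\<lambda>i. \<Sum>s\<in>S. c s * (D * s i)) = (\<lambda>i. 0)"
      then have "(\<lambda>i. \<Sum>s\<in>S. c s * s i) = (\<lambda>i. 0)"
        using D(1) by (simp add: fun_eq_iff mult.left_commute[of _ D] flip: sum_distrib_left)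
      then show "\<forall>s\<in>S. c s = 0" using S(3) by (auto dest: int_indep_onD)
    qed
    moreover have "(\<lambda>s i. D * s i) ` S \<subseteq> Y" using D(2) by blast
    ultimately show ?thesis
      using N[of "(\<lambda>s i. D * s i) ` S"] int_indep_on_image[OF S(2) indep] S(2) by simp
  qed
  then show ?thesis unfolding int_finite_rank_def by blast
qed

section \<open>Biorthogonal systems\<close>

definition biorthogonal_upto ::
    "('x \<Rightarrow> int) set \<Rightarrow> nat \<Rightarrow> (nat \<Rightarrow> 'x \<Rightarrow> int) \<Rightarrow> (nat \<Rightarrow> ('x \<Rightarrow> int) \<Rightarrow> int) \<Rightarrow> bool" where
  "biorthogonal_upto B n x F \<longleftrightarrow>
     (\<forall>k<n. x k \<in> B \<and> int_linear (F k) \<and> F k (x k) \<noteq> 0 \<and> (\<forall>j<n. j \<noteq> k \<longrightarrow> F k (x j) = 0))"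

lemma biorthogonal_upto_cong:
  "(\<And>k. k < n \<Longrightarrow> x k = x' k \<and> F k = F' k) \<Longrightarrow>
    biorthogonal_upto B n x F \<longleftrightarrow> biorthogonal_upto B n x' F'"
  unfolding biorthogonal_upto_def by auto

(*
  Starting from the i-th coordinate, step k eliminates x_k by cross-multiplying with F_k. As F_k
  vanishes on v and on x_j for j < k, the earlier zeros and the nonzero value at v survive.
*)
primrec coordinate_annihilator ::
    "(nat \<Rightarrow> 'x \<Rightarrow> int) \<Rightarrow> (nat \<Rightarrow> ('x \<Rightarrow> int) \<Rightarrow> int) \<Rightarrow> 'x \<Rightarrow> nat \<Rightarrow> ('x \<Rightarrow> int) \<Rightarrow> int" where
  "coordinate_annihilator x F i 0 = (\<lambda>u. u i)"
| "coordinate_annihilator x F i (Suc k) =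
     (\<lambda>u. F k (x k) * coordinate_annihilator x F i k u - coordinate_annihilator x F i k (x k) * F k u)"

lemma coordinate_annihilator:
  assumes "biorthogonal_upto B n x F" "\<forall>k<n. F k v = 0" "v i \<noteq> 0" "k \<le> n"
  shows "int_linear (coordinate_annihilator x F i k) \<and>
    (\<forall>j<k. coordinate_annihilator x F i k (x j) = 0) \<and> coordinate_annihilator x F i k v \<noteq> 0"
  using assms(4)
proof (induction k)
  case 0
  then show ?case using int_linear_coordinate assms(3) by simp
next
  case (Suc k)
  then have "k < n" by simp
  then have "int_linear (F k)" "F k (x k) \<noteq> 0" "F k v = 0" "\<forall>j<k. F k (x j) = 0"
    using assms(1,2) unfolding biorthogonal_upto_def by auto
  with Suc show ?case by (auto simp: less_Suc_eq intro: int_linear_combination)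
qed

lemma biorthogonal_upto_extend:
  assumes B: "int_submodule B" "\<not> int_finite_rank B" and xF: "biorthogonal_upto B n x F"
  obtains v G where "biorthogonal_upto B (Suc n) (x(n := v)) (F(n := G))"
proof -
  have "\<forall>k<n. int_linear (F k)" using xF unfolding biorthogonal_upto_def by blast
  then have "\<not> int_finite_rank (B \<inter> {v. \<forall>k<n. F k v = 0})"
    using not_int_finite_rank_kernels[OF B(1) _ B(2)] by blast
  then obtain v i where "v \<in> B \<inter> {v. \<forall>k<n. F k v = 0}" "v i \<noteq> 0"
    by (rule not_int_finite_rank_nonzero)
  then have v: "v \<in> B" "\<forall>k<n. F k v = 0" "v i \<noteq> 0" by auto
  let ?G = "coordinate_annihilator x F i n"
  from coordinate_annihilator[of B n x F v i n] xF v(2,3)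
  have "int_linear ?G" "\<forall>j<n. ?G (x j) = 0" "?G v \<noteq> 0" by simp_all
  with xF v(1,2) have "biorthogonal_upto B (Suc n) (x(n := v)) (F(n := ?G))"
    unfolding biorthogonal_upto_def by (simp add: less_Suc_eq)
  then show thesis by (rule that)
qed

lemma biorthogonal_sequence:
  assumes "int_submodule B" "\<not> int_finite_rank B"
  obtains x :: "nat \<Rightarrow> 'x \<Rightarrow> int" and F where "\<And>k. x k \<in> B" "\<And>k. int_linear (F k)"
    "\<And>k. F k (x k) \<noteq> 0" "\<And>j k. j \<noteq> k \<Longrightarrow> F k (x j) = 0"
proof -
  \<comment> \<open>\<open>P p n r\<close> depends on \<open>p\<close> only below \<open>n\<close>, as dependent choice requires.\<close>
  define P where "P p n r \<longleftrightarrow> (biorthogonal_upto B n (fst \<circ> p) (snd \<circ> p) \<longrightarrow>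
      biorthogonal_upto B (Suc n) ((fst \<circ> p)(n := fst r)) ((snd \<circ> p)(n := snd r)))"
    for p :: "nat \<Rightarrow> ('x \<Rightarrow> int) \<times> (('x \<Rightarrow> int) \<Rightarrow> int)" and n r
  have "\<exists>p. \<forall>n. P p n (p n)"
  proof (rule dependent_wellorder_choice)
    fix r and p q :: "nat \<Rightarrow> ('x \<Rightarrow> int) \<times> (('x \<Rightarrow> int) \<Rightarrow> int)" and n :: nat
    assume "\<And>k. k < n \<Longrightarrow> p k = q k"
    then show "P p n r = P q n r"
      unfolding P_def
      by (intro arg_cong2[where f = "(\<longrightarrow>)"] biorthogonal_upto_cong) (auto simp: less_Suc_eq)
  next
    fix p :: "nat \<Rightarrow> ('x \<Rightarrow> int) \<times> (('x \<Rightarrow> int) \<Rightarrow> int)" and n :: nat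
    show "\<exists>r. P p n r"
    proof (cases "biorthogonal_upto B n (fst \<circ> p) (snd \<circ> p)")
      case True
      then obtain v G where "biorthogonal_upto B (Suc n) ((fst \<circ> p)(n := v)) ((snd \<circ> p)(n := G))"
        by (rule biorthogonal_upto_extend[OF assms])
      then show ?thesis unfolding P_def by (intro exI[of _ "(v, G)"]) simp
    qed (simp add: P_def)
  qed
  then obtain p where p: "\<And>n. P p n (p n)" by blast
  have xF: "biorthogonal_upto B n (fst \<circ> p) (snd \<circ> p)" for n
  proof (induction n)
    case 0
    then show ?case by (simp add: biorthogonal_upto_def)
  next
    case (Suc n)
    have "(fst \<circ> p)(n := fst (p n)) = fst \<circ> p" "(snd \<circ> p)(n := snd (p n)) = snd \<circ> p"
      by (simp_all add: fun_eq_iff)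
    with p[of n] Suc show ?case unfolding P_def by argo
  qed
  show thesis
  proof (rule that)
    fix j k :: nat
    show "(fst \<circ> p) k \<in> B" "int_linear ((snd \<circ> p) k)" "(snd \<circ> p) k ((fst \<circ> p) k) \<noteq> 0"
      using xF[of "Suc k"] unfolding biorthogonal_upto_def by auto
    assume "j \<noteq> k"
    then show "(snd \<circ> p) k ((fst \<circ> p) j) = 0"
      using xF[of "Suc (j + k)"] unfolding biorthogonal_upto_def by auto
  qed
qed

section \<open>Rank in commutative groups\<close>

lemma hom_finprod:
  assumes G: "comm_group G" and G2: "comm_group G2" and h: "h \<in> hom G G2"
    and f: "f \<in> A \<rightarrow> carrier G"
  shows "h (finprod G f A) = finprod G2 (\<lambda>a. h (f a)) A"
proof -
  interpret G: comm_group G by (rule G)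
  interpret G2: comm_group G2 by (rule G2)
  interpret group_hom G G2 h by (rule group_hom.intro[OF G.is_group G2.is_group group_hom_axioms.intro[OF h]])
  show ?thesis
    using f
  proof (induction A rule: infinite_finite_induct)
    case (insert a A)
    then have "h (finprod G f (insert a A)) = h (f a) \<otimes>\<^bsub>G2\<^esub> h (finprod G f A)"
      by simp
    with insert show ?case by (simp add: Pi_iff)
  qed simp_all
qed

lemma lin_indep_inj_hom_image:
  assumes G: "comm_group G" and G2: "comm_group G2" and h: "h \<in> hom G G2"
    and inj: "inj_on h (carrier G)" and S: "finite S" "S \<subseteq> carrier G" "lin_indep G S"
  shows "lin_indep G2 (h ` S)"
  unfolding lin_indep_def
proof (intro conjI allI impI ballI)
  interpret G: comm_group G by (rule G)
  interpret G2: comm_group G2 by (rule G2)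
  interpret group_hom G G2 h by (rule group_hom.intro[OF G.is_group G2.is_group group_hom_axioms.intro[OF h]])
  have injS: "inj_on h S" using inj S(2) by (rule inj_on_subset)
  show "h ` S \<subseteq> carrier G2" using S(2) by auto
  fix c :: "_ \<Rightarrow> int" and t
  assume "finprod G2 (\<lambda>t. t [^]\<^bsub>G2\<^esub> c t) (h ` S) = \<one>\<^bsub>G2\<^esub>" and t: "t \<in> h ` S"
  then have "h (finprod G (\<lambda>s. s [^]\<^bsub>G\<^esub> c (h s)) S) = h \<one>\<^bsub>G\<^esub>"
    using S(2) by (simp add: hom_finprod[OF G G2 h] G2.finprod_reindex[OF _ injS] hom_int_pow Pi_iff subset_iff
        cong: G2.finprod_cong)
  then have "finprod G (\<lambda>s. s [^]\<^bsub>G\<^esub> c (h s)) S = \<one>\<^bsub>G\<^esub>"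
    using S(2) by (intro inj_onD[OF inj]) (auto simp: Pi_iff subset_iff)
  then show "c t = 0" using S(3) t unfolding lin_indep_def by auto
qed

lemma finite_rank_inj_hom:
  assumes G: "comm_group G" and G2: "comm_group G2" and h: "h \<in> hom G G2"
    and inj: "inj_on h (carrier G)" and Y: "Y \<subseteq> carrier G" and rank: "finite_rank G2 (h ` Y)"
  shows "finite_rank G Y"
proof -
  obtain N where N: "\<And>S. S \<subseteq> h ` Y \<Longrightarrow> finite S \<Longrightarrow> lin_indep G2 S \<Longrightarrow> card S \<le> N"
    using rank unfolding finite_rank_def by blast
  have "card S \<le> N" if S: "S \<subseteq> Y" "finite S" "lin_indep G S" for S
  proof -
    have SG: "S \<subseteq> carrier G" using S(1) Y by blast
    have "card (h ` S) \<le> N"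
      using N lin_indep_inj_hom_image[OF G G2 h inj S(2) SG S(3)] S(1,2) by blast
    then show ?thesis using card_image[OF inj_on_subset[OF inj SG]] by simp
  qed
  then show ?thesis unfolding finite_rank_def by blast
qed

lemma finite_rank_of_finite: "finite Y \<Longrightarrow> finite_rank G Y"
  unfolding finite_rank_def by (auto intro: card_mono)

section \<open>Groups of integer-valued functions\<close>

lemma Zprod_simps [simp]:
  "carrier (Zprod I) = {f. \<forall>i. i \<notin> I \<longrightarrow> f i = 0}"
  "f \<otimes>\<^bsub>Zprod I\<^esub> g = (\<lambda>i. f i + g i)" "\<one>\<^bsub>Zprod I\<^esub> = (\<lambda>i. 0)"
  by (simp_all add: Zprod_def)

lemma Zfree_simps [simp]:
  "carrier (Zfree I) = {f. finite {i. f i \<noteq> 0} \<and> (\<forall>i. i \<notin> I \<longrightarrow> f i = 0)}"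
  "f \<otimes>\<^bsub>Zfree I\<^esub> g = (\<lambda>i. f i + g i)" "\<one>\<^bsub>Zfree I\<^esub> = (\<lambda>i. 0)"
  by (simp_all add: Zfree_def)

locale pointwise_int_group =
  fixes M :: "('x \<Rightarrow> int) monoid"
  assumes comm_group: "comm_group M"
    and mult_eq: "\<And>f g. f \<otimes>\<^bsub>M\<^esub> g = (\<lambda>i. f i + g i)"
    and one_eq: "\<one>\<^bsub>M\<^esub> = (\<lambda>i. 0)"
    and uminus_closed: "\<And>x. x \<in> carrier M \<Longrightarrow> (\<lambda>i. - x i) \<in> carrier M"
begin

sublocale comm_group M by (rule comm_group)

lemma inv_eq: "x \<in> carrier M \<Longrightarrow> inv\<^bsub>M\<^esub> x = (\<lambda>i. - x i)"
  by (rule inv_equality) (simp_all add: mult_eq one_eq uminus_closed)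

lemma nat_pow_eq: "x \<in> carrier M \<Longrightarrow> x [^]\<^bsub>M\<^esub> (n::nat) = (\<lambda>i. int n * x i)"
  by (induction n) (simp_all add: one_eq mult_eq algebra_simps)

lemma int_pow_eq:
  assumes x: "x \<in> carrier M"
  shows "x [^]\<^bsub>M\<^esub> (k::int) = (\<lambda>i. k * x i)"
proof (cases "k < 0")
  case True
  then have "x [^]\<^bsub>M\<^esub> k = inv\<^bsub>M\<^esub> (x [^]\<^bsub>M\<^esub> nat (- k))"
    by (simp only: int_pow_def2 if_True)
  also have "\<dots> = (\<lambda>i. - (int (nat (- k)) * x i))"
    by (subst inv_eq[OF nat_pow_closed[OF x]]) (simp only: nat_pow_eq[OF x])
  finally show ?thesis using True by simp
next
  case False
  then show ?thesis by (simp only: int_pow_def2 if_False nat_pow_eq[OF x]) simp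
qed

lemma finprod_pow_eq:
  assumes "finite S" "S \<subseteq> carrier M"
  shows "finprod M (\<lambda>s. s [^]\<^bsub>M\<^esub> (c s :: int)) S = (\<lambda>i. \<Sum>s\<in>S. c s * s i)"
  using assms
proof (induction S rule: finite_induct)
  case (insert a S)
  then have "finprod M (\<lambda>s. s [^]\<^bsub>M\<^esub> c s) (insert a S) =
      a [^]\<^bsub>M\<^esub> c a \<otimes>\<^bsub>M\<^esub> finprod M (\<lambda>s. s [^]\<^bsub>M\<^esub> c s) S"
    by (intro finprod_insert) auto
  with insert show ?case by (simp add: mult_eq int_pow_eq)
qed (simp add: one_eq)

lemma lin_indep_iff:
  "finite S \<Longrightarrow> lin_indep M S \<longleftrightarrow> S \<subseteq> carrier M \<and> int_independent S"
  by (auto simp: lin_indep_def int_indep_on_def finprod_pow_eq one_eq)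

lemma finite_rank_iff: "Y \<subseteq> carrier M \<Longrightarrow> finite_rank M Y \<longleftrightarrow> int_finite_rank Y"
  unfolding finite_rank_def int_finite_rank_def
  by (metis (no_types, lifting) lin_indep_iff subset_trans)

end

lemma pointwise_int_group_Zprod: "pointwise_int_group (Zprod I)"
proof (rule pointwise_int_group.intro)
  show "comm_group (Zprod I)"
  proof (rule comm_groupI)
    fix x assume "x \<in> carrier (Zprod I)"
    then show "\<exists>y\<in>carrier (Zprod I). y \<otimes>\<^bsub>Zprod I\<^esub> x = \<one>\<^bsub>Zprod I\<^esub>"
      by (intro bexI[of _ "\<lambda>i. - x i"]) auto
  qed auto
qed auto

lemma pointwise_int_group_Zfree: "pointwise_int_group (Zfree (I :: 'a set))"
proof (rule pointwise_int_group.intro)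
  have finite_sum_support: "finite {i. x i + y i \<noteq> 0}"
    if "finite {i. x i \<noteq> 0}" "finite {i. y i \<noteq> 0}" for x y :: "'a \<Rightarrow> int"
    using finite_UnI[OF that] by (rule finite_subset[rotated]) auto
  show "comm_group (Zfree I)"
  proof (rule comm_groupI)
    fix x assume "x \<in> carrier (Zfree I)"
    then show "\<exists>y\<in>carrier (Zfree I). y \<otimes>\<^bsub>Zfree I\<^esub> x = \<one>\<^bsub>Zfree I\<^esub>"
      by (intro bexI[of _ "\<lambda>i. - x i"]) auto
  qed (auto simp: finite_sum_support)
qed auto

lemma pointwise_int_group_hom_scale:
  assumes M: "pointwise_int_group M" and N: "pointwise_int_group N"
    and \<phi>: "\<phi> \<in> hom M N" and z: "z \<in> carrier M"
  shows "\<phi> (\<lambda>i. D * z i) = (\<lambda>j. D * \<phi> z j)"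
proof -
  interpret M: pointwise_int_group M by (rule M)
  interpret N: pointwise_int_group N by (rule N)
  have "\<phi> (z [^]\<^bsub>M\<^esub> D) = \<phi> z [^]\<^bsub>N\<^esub> D"
    by (rule hom_int_pow[OF \<phi> z M.is_group N.is_group])
  then show ?thesis
    by (simp only: M.int_pow_eq[OF z] N.int_pow_eq[OF hom_in_carrier[OF \<phi> z]])
qed

lemma finite_rank_of_embedding:
  assumes G: "comm_group G" and e: "e \<in> hom G (Zprod I)" "inj_on e (carrier G)"
    and Y: "Y \<subseteq> carrier G" and rank: "int_finite_rank (e ` Y)"
  shows "finite_rank G Y"
proof -
  interpret Z: pointwise_int_group "Zprod I" by (rule pointwise_int_group_Zprod)
  have "e ` Y \<subseteq> carrier (Zprod I)" using Y hom_in_carrier[OF e(1)] by blast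
  then have "finite_rank (Zprod I) (e ` Y)" using rank Z.finite_rank_iff by blast
  then show ?thesis by (rule finite_rank_inj_hom[OF G Z.comm_group e Y])
qed

lemma int_submodule_hom_image:
  assumes G: "group G" and H: "subgroup H G" and h: "h \<in> hom G (Zprod I)"
  shows "int_submodule (h ` H)"
  unfolding int_submodule_def
proof (intro conjI ballI allI)
  interpret Z: pointwise_int_group "Zprod I" by (rule pointwise_int_group_Zprod)
  interpret group_hom G "Zprod I" h
    by (rule group_hom.intro[OF G Z.is_group group_hom_axioms.intro[OF h]])
  have HG: "H \<subseteq> carrier G" using H by (rule subgroup.subset)
  have "h \<one>\<^bsub>G\<^esub> = (\<lambda>i. 0)" by simp
  then show "(\<lambda>i. 0) \<in> h ` H"
    using subgroup.one_closed[OF H] by (metis image_eqI)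
  fix u v and a b :: int assume "u \<in> h ` H" "v \<in> h ` H"
  then obtain g g' where g: "g \<in> H" "g' \<in> H" "u = h g" "v = h g'" by blast
  then have "g [^]\<^bsub>G\<^esub> a \<otimes>\<^bsub>G\<^esub> g' [^]\<^bsub>G\<^esub> b \<in> H"
    using group.subgroup_int_pow_closed[OF G H] subgroup.m_closed[OF H] by blast
  moreover have "h (g [^]\<^bsub>G\<^esub> a \<otimes>\<^bsub>G\<^esub> g' [^]\<^bsub>G\<^esub> b) = (\<lambda>i. a * u i + b * v i)"
  proof -
    have gG: "g \<in> carrier G" "g' \<in> carrier G" using g(1,2) HG by auto
    then have "h (g [^]\<^bsub>G\<^esub> a \<otimes>\<^bsub>G\<^esub> g' [^]\<^bsub>G\<^esub> b) = h (g [^]\<^bsub>G\<^esub> a) \<otimes>\<^bsub>Zprod I\<^esub> h (g' [^]\<^bsub>G\<^esub> b)"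
      by (intro hom_mult) auto
    also have "\<dots> = (\<lambda>i. a * u i + b * v i)"
      using gG g(3,4) by (simp only: hom_int_pow Z.int_pow_eq hom_closed Zprod_simps(2))
    finally show ?thesis .
  qed
  ultimately show "(\<lambda>i. a * u i + b * v i) \<in> h ` H" by (metis image_eqI)
qed

section \<open>Binding the finitely supported sequences\<close>

lemma biorthogonal_multiples:
  assumes B: "int_submodule B" and x: "\<And>k. x k \<in> B" and F: "\<And>k. int_linear (F k)"
    and diag: "\<And>k. F k (x k) \<noteq> 0" and off_diag: "\<And>j k. j \<noteq> k \<Longrightarrow> F k (x j) = 0"
    and Z: "finite Z" "Z \<subseteq> Zomega_fin"
  shows "\<exists>D\<noteq>0. \<forall>z\<in>Z. \<exists>v\<in>B. (\<lambda>n. F n v) = (\<lambda>n. D * z n)"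
proof -
  have "finite (\<Union>z\<in>Z. {n. z n \<noteq> 0})" using Z by auto
  then obtain M where "(\<Union>z\<in>Z. {n. z n \<noteq> 0}) \<subseteq> {..<M}" using finite_nat_bounded by blast
  then have M: "\<And>z n. z \<in> Z \<Longrightarrow> M \<le> n \<Longrightarrow> z n = 0" by fastforce
  define D where "D = (\<Prod>k<M. F k (x k))"
  have "\<exists>v\<in>B. (\<lambda>n. F n v) = (\<lambda>n. D * z n)" if z: "z \<in> Z" for z
  proof
    define c where "c k = z k * (D div F k (x k))" for k
    show "(\<lambda>i. \<Sum>k<M. c k * x k i) \<in> B" using x by (intro int_submodule_sum[OF B]) auto
    have "F n (\<lambda>i. \<Sum>k<M. c k * x k i) = D * z n" for n
    proof -
      have "F n (\<lambda>i. \<Sum>k<M. c k * x k i) = (\<Sum>k<M. c k * F n (x k))"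
        by (rule int_linear_sum[OF F])
      also have "\<dots> = (\<Sum>k<M. if k = n then c k * F n (x k) else 0)"
        using off_diag by (intro sum.cong) auto
      also have "\<dots> = D * z n"
      proof (cases "n < M")
        case True
        then have "F n (x n) dvd D" unfolding D_def by (intro dvd_prodI) auto
        with True show ?thesis by (simp add: c_def)
      qed (use M[OF z] in simp)
      finally show ?thesis .
    qed
    then show "(\<lambda>n. F n (\<lambda>i. \<Sum>k<M. c k * x k i)) = (\<lambda>n. D * z n)" by simp
  qed
  moreover have "D \<noteq> 0" using diag by (simp add: D_def)
  ultimately show ?thesis by blast
qed

lemma hom_carrier_update_target: "h \<in> hom G M \<Longrightarrow> h ` carrier G \<subseteq> S \<Longrightarrow> h \<in> hom G (M\<lparr>carrier := S\<rparr>)"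
  by (auto simp: hom_def)

lemma hom_carrier_update_source: "h \<in> hom (M\<lparr>carrier := S\<rparr>) N \<Longrightarrow> T \<subseteq> S \<Longrightarrow> h \<in> hom (M\<lparr>carrier := T\<rparr>) N"
  by (auto simp: hom_def)

lemma Zomega_restrict_Zomega_fin: "Zomega\<lparr>carrier := Zomega_fin\<rparr> = Zfree UNIV"
  by (simp add: Zfree_def Zprod_def)

lemma subset_set_mult_Zomega_fin:
  assumes zero: "(\<lambda>n. 0) \<in> A"
  shows "A \<subseteq> A <#>\<^bsub>Zomega\<^esub> Zomega_fin" "Zomega_fin \<subseteq> A <#>\<^bsub>Zomega\<^esub> Zomega_fin"
proof -
  have zero_fin: "(\<lambda>n. 0 :: int) \<in> Zomega_fin" by simp
  show "A \<subseteq> A <#>\<^bsub>Zomega\<^esub> Zomega_fin"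
  proof
    fix w assume "w \<in> A"
    moreover have "w = w \<otimes>\<^bsub>Zomega\<^esub> (\<lambda>n. 0)" by simp
    ultimately show "w \<in> A <#>\<^bsub>Zomega\<^esub> Zomega_fin" using zero_fin unfolding set_mult_def by blast
  qed
  show "Zomega_fin \<subseteq> A <#>\<^bsub>Zomega\<^esub> Zomega_fin"
  proof
    fix w assume "w \<in> Zomega_fin"
    moreover have "w = (\<lambda>n. 0) \<otimes>\<^bsub>Zomega\<^esub> w" by simp
    ultimately show "w \<in> A <#>\<^bsub>Zomega\<^esub> Zomega_fin" using zero unfolding set_mult_def by blast
  qed
qed

lemma countable_Zomega_fin: "countable Zomega_fin"
proof (rule countable_subset)
  let ?extend = "\<lambda>l::int list. \<lambda>n. if n < length l then l ! n else 0"
  show "Zomega_fin \<subseteq> range ?extend"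
  proof
    fix z assume "z \<in> Zomega_fin"
    then obtain N where "{n. z n \<noteq> 0} \<subseteq> {..<N}" using finite_nat_bounded by auto
    then have "z = ?extend (map z [0..<N])" by (auto simp: fun_eq_iff)
    then show "z \<in> range ?extend" by blast
  qed
qed simp

lemma countable_inj_into_infinite:
  assumes "countable C" "infinite (UNIV :: 'a set)"
  obtains \<theta> :: "'c \<Rightarrow> 'a" where "inj_on \<theta> C"
proof -
  obtain g :: "'c \<Rightarrow> nat" where g: "inj_on g C" using assms(1) unfolding countable_def by blast
  obtain h :: "nat \<Rightarrow> 'a" where "inj h" using infinite_countable_subset[OF assms(2)] by blast
  with g have "inj_on (h \<circ> g) C" by (simp add: comp_inj_on inj_on_subset)
  then show thesis by (rule that)
qed

(*
  The definition of binds only admits bases in the element type of G, so countable supports are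
  moved there along an injection.
*)
definition relabel :: "('c \<Rightarrow> 'a) \<Rightarrow> 'c set \<Rightarrow> ('c \<Rightarrow> int) \<Rightarrow> 'a \<Rightarrow> int" where
  "relabel \<theta> C u a = (if a \<in> \<theta> ` C then u (inv_into C \<theta> a) else 0)"

lemma relabel_apply: "inj_on \<theta> C \<Longrightarrow> j \<in> C \<Longrightarrow> relabel \<theta> C u (\<theta> j) = u j"
  by (simp add: relabel_def)

lemma relabel_scale: "relabel \<theta> C (\<lambda>j. D * u j) = (\<lambda>a. D * relabel \<theta> C u a)"
  by (simp add: relabel_def fun_eq_iff)

lemma relabel_hom: "inj_on \<theta> C \<Longrightarrow> relabel \<theta> C \<in> hom (Zfree J) (Zfree (\<theta> ` C))"
proof (rule homI)
  fix u assume "inj_on \<theta> C" "u \<in> carrier (Zfree J)"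
  then have "{a. relabel \<theta> C u a \<noteq> 0} \<subseteq> \<theta> ` {j. u j \<noteq> 0}" "finite {j. u j \<noteq> 0}"
    by (auto simp: relabel_def image_iff)
  then have "finite {a. relabel \<theta> C u a \<noteq> 0}" by (meson finite_imageI finite_subset)
  then show "relabel \<theta> C u \<in> carrier (Zfree (\<theta> ` C))" by (simp add: relabel_def)
next
  fix u v
  show "relabel \<theta> C (u \<otimes>\<^bsub>Zfree J\<^esub> v) = relabel \<theta> C u \<otimes>\<^bsub>Zfree (\<theta> ` C)\<^esub> relabel \<theta> C v"
    by (simp add: relabel_def fun_eq_iff)
qed

lemma relabel_inj: "inj_on \<theta> C \<Longrightarrow> inj_on (relabel \<theta> C) (carrier (Zfree C))"
proof (rule inj_onI)
  fix u v assume \<theta>: "inj_on \<theta> C" and uv: "u \<in> carrier (Zfree C)" "v \<in> carrier (Zfree C)"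
    and eq: "relabel \<theta> C u = relabel \<theta> C v"
  show "u = v"
  proof
    fix j show "u j = v j"
    proof (cases "j \<in> C")
      case True
      then show ?thesis using relabel_apply[OF \<theta> True] eq by metis
    qed (use uv in simp)
  qed
qed

lemma int_finite_rank_relabel:
  assumes \<theta>: "inj_on \<theta> C" and Y: "Y \<subseteq> carrier (Zfree C)" and rank: "int_finite_rank (relabel \<theta> C ` Y)"
  shows "int_finite_rank Y"
proof -
  interpret ZC: pointwise_int_group "Zfree C" by (rule pointwise_int_group_Zfree)
  interpret Z\<theta>C: pointwise_int_group "Zfree (\<theta> ` C)" by (rule pointwise_int_group_Zfree)
  have "relabel \<theta> C ` Y \<subseteq> carrier (Zfree (\<theta> ` C))"
    using Y hom_in_carrier[OF relabel_hom[OF \<theta>]] by blast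
  then have "finite_rank (Zfree (\<theta> ` C)) (relabel \<theta> C ` Y)" using rank Z\<theta>C.finite_rank_iff by blast
  then have "finite_rank (Zfree C) Y"
    by (rule finite_rank_inj_hom[OF ZC.comm_group Z\<theta>C.comm_group relabel_hom[OF \<theta>] relabel_inj[OF \<theta>] Y])
  then show ?thesis using ZC.finite_rank_iff[OF Y] by blast
qed

lemma countable_support_image_Zomega_fin:
  assumes \<phi>: "\<phi> \<in> hom (Zfree UNIV) (Zfree J)"
  obtains C where "countable C" "\<phi> ` Zomega_fin \<subseteq> carrier (Zfree C)"
proof
  have finite_support: "finite {j. \<phi> z j \<noteq> 0}" if "z \<in> Zomega_fin" for z
    using hom_in_carrier[OF \<phi> that] by simp
  then show "countable (\<Union>z\<in>Zomega_fin. {j. \<phi> z j \<noteq> 0})"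
    by (intro countable_UN[OF countable_Zomega_fin] countable_finite)
  show "\<phi> ` Zomega_fin \<subseteq> carrier (Zfree (\<Union>z\<in>Zomega_fin. {j. \<phi> z j \<noteq> 0}))"
    using finite_support by auto
qed

lemma linear_functionals_hom:
  assumes e: "e \<in> hom G (Zprod I)" and F: "\<And>n. int_linear (F n)"
  shows "(\<lambda>g n. F n (e g)) \<in> hom G Zomega"
proof (rule homI)
  fix g h assume "g \<in> carrier G" "h \<in> carrier G"
  then show "(\<lambda>n. F n (e (g \<otimes>\<^bsub>G\<^esub> h))) = (\<lambda>n. F n (e g)) \<otimes>\<^bsub>Zomega\<^esub> (\<lambda>n. F n (e h))"
    using int_linearD[OF F, where a = 1 and b = 1] by (simp add: hom_mult[OF e])
qed simp

lemma binds_set_mult_Zomega_fin: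
  fixes G :: "('a, 'b) monoid_scheme" and f :: "'a \<Rightarrow> nat \<Rightarrow> int"
  assumes G: "comm_group G" and inf: "infinite (UNIV :: 'a set)"
    and f: "f \<in> hom G Zomega" and H: "H \<subseteq> carrier G" and binds: "binds G H"
    and multiples: "\<And>Z. finite Z \<Longrightarrow> Z \<subseteq> Zomega_fin \<Longrightarrow> \<exists>D\<noteq>0. \<forall>z\<in>Z. \<exists>h\<in>H. f h = (\<lambda>n. D * z n)"
  shows "binds (Zomega\<lparr>carrier := f ` carrier G <#>\<^bsub>Zomega\<^esub> Zomega_fin\<rparr>) Zomega_fin"
  unfolding binds_def
proof (intro allI impI)
  fix J :: "(nat \<Rightarrow> int) set" and \<phi>
  let ?K = "Zomega\<lparr>carrier := f ` carrier G <#>\<^bsub>Zomega\<^esub> Zomega_fin\<rparr>"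
  assume \<phi>: "\<phi> \<in> hom ?K (Zfree J)"
  interpret G: comm_group G by (rule G)
  interpret Zomega: pointwise_int_group Zomega by (rule pointwise_int_group_Zprod)
  have "f \<one>\<^bsub>G\<^esub> = (\<lambda>n. 0)"
    using hom_one[OF f G.is_group Zomega.is_group] by (simp only: Zprod_simps(3))
  then have "(\<lambda>n. 0) \<in> f ` carrier G" using G.one_closed by (metis image_eqI)
  note K = subset_set_mult_Zomega_fin[OF this]
  have \<phi>_fin: "\<phi> \<in> hom (Zfree UNIV) (Zfree J)"
    using hom_carrier_update_source[OF \<phi> K(2)] unfolding Zomega_restrict_Zomega_fin .
  obtain C where C: "countable C" "\<phi> ` Zomega_fin \<subseteq> carrier (Zfree C)"
    by (rule countable_support_image_Zomega_fin[OF \<phi>_fin])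
  obtain \<theta> :: "(nat \<Rightarrow> int) \<Rightarrow> 'a" where \<theta>: "inj_on \<theta> C"
    using C(1) inf by (rule countable_inj_into_infinite)
  define P where "P = relabel \<theta> C \<circ> \<phi> \<circ> f"
  have "f \<in> hom G ?K" by (rule hom_carrier_update_target[OF f K(1)])
  then have P: "P \<in> hom G (Zfree (\<theta> ` C))"
    unfolding P_def comp_assoc by (rule hom_compose[OF hom_compose[OF _ \<phi>] relabel_hom[OF \<theta>]])
  then have "finite_rank (Zfree (\<theta> ` C)) (P ` H)"
    by (rule binds[unfolded binds_def, rule_format])
  moreover have "P ` H \<subseteq> carrier (Zfree (\<theta> ` C))" using hom_in_carrier[OF P] H by blast
  ultimately have "int_finite_rank (P ` H)"
    using pointwise_int_group.finite_rank_iff[OF pointwise_int_group_Zfree] by blast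
  then have "int_finite_rank (relabel \<theta> C ` \<phi> ` Zomega_fin)"
  proof (rule int_finite_rank_multiples)
    fix S assume "finite S" "S \<subseteq> relabel \<theta> C ` \<phi> ` Zomega_fin"
    then obtain Z where Z: "Z \<subseteq> Zomega_fin" "finite Z" "S = (\<lambda>z. relabel \<theta> C (\<phi> z)) ` Z"
      unfolding image_image by (meson finite_subset_image)
    obtain D where D: "D \<noteq> 0" "\<forall>z\<in>Z. \<exists>h\<in>H. f h = (\<lambda>n. D * z n)"
      using multiples[OF Z(2,1)] by blast
    have "(\<lambda>a. D * relabel \<theta> C (\<phi> z) a) \<in> P ` H" if z: "z \<in> Z" for z
    proof -
      obtain h where h: "h \<in> H" "f h = (\<lambda>n. D * z n)" using D(2) z by blast
      then have "P h = relabel \<theta> C (\<lambda>j. D * \<phi> z j)"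
        using pointwise_int_group_hom_scale[OF pointwise_int_group_Zfree pointwise_int_group_Zfree \<phi>_fin, of z D] Z(1) z
        by (auto simp: P_def)
      then have "P h = (\<lambda>a. D * relabel \<theta> C (\<phi> z) a)" by (simp only: relabel_scale)
      then show ?thesis using h(1) by (metis image_eqI)
    qed
    then show "\<exists>D\<noteq>0. \<forall>s\<in>S. (\<lambda>i. D * s i) \<in> P ` H" using D(1) Z(3) by auto
  qed
  then have "int_finite_rank (\<phi> ` Zomega_fin)" by (rule int_finite_rank_relabel[OF \<theta> C(2)])
  moreover have "\<phi> ` Zomega_fin \<subseteq> carrier (Zfree J)" using hom_in_carrier[OF \<phi>_fin] by blast
  ultimately show "finite_rank (Zfree J) (\<phi> ` Zomega_fin)"
    using pointwise_int_group.finite_rank_iff[OF pointwise_int_group_Zfree] by blast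
qed

theorem theorem4:
  fixes G :: "('a, 'b) monoid_scheme"
  assumes "comm_group G"
    and "torsionless G"
    and "\<exists>H. subgroup H G \<and> \<not> finite_rank G H \<and> binds G H"
  shows "\<exists>G' f. subgroup G' Zomega \<and> f \<in> hom G Zomega \<and> f ` carrier G = G' \<and>
           binds (Zomega\<lparr>carrier := G' <#>\<^bsub>Zomega\<^esub> Zomega_fin\<rparr>) Zomega_fin"
proof -
  interpret G: comm_group G by (rule assms(1))
  interpret Zomega: pointwise_int_group Zomega by (rule pointwise_int_group_Zprod)
  obtain H where H: "subgroup H G" "\<not> finite_rank G H" "binds G H" using assms(3) by blast
  have HG: "H \<subseteq> carrier G" using H(1) by (rule subgroup.subset)
  obtain I :: "'a set" and e where e: "e \<in> hom G (Zprod I)" "inj_on e (carrier G)"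
    using assms(2) unfolding torsionless_def by blast
  have B: "int_submodule (e ` H)" by (rule int_submodule_hom_image[OF G.is_group H(1) e(1)])
  have rank: "\<not> int_finite_rank (e ` H)" using finite_rank_of_embedding[OF assms(1) e HG] H(2) by blast
  obtain x :: "nat \<Rightarrow> 'a \<Rightarrow> int" and F where xF: "\<And>k. x k \<in> e ` H" "\<And>k. int_linear (F k)"
    "\<And>k. F k (x k) \<noteq> 0" "\<And>j k. j \<noteq> k \<Longrightarrow> F k (x j) = 0"
    by (fact biorthogonal_sequence[OF B rank])
  define f where "f g = (\<lambda>n. F n (e g))" for g
  have f: "f \<in> hom G Zomega" unfolding f_def by (rule linear_functionals_hom[OF e(1) xF(2)])
  have "infinite H" using H(2) finite_rank_of_finite by blast
  then have "infinite (UNIV :: 'a set)" by (rule infinite_super[rotated]) simp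
  then have "binds (Zomega\<lparr>carrier := f ` carrier G <#>\<^bsub>Zomega\<^esub> Zomega_fin\<rparr>) Zomega_fin"
  proof (rule binds_set_mult_Zomega_fin[OF assms(1) _ f HG H(3)])
    fix Z assume "finite Z" "Z \<subseteq> Zomega_fin"
    with biorthogonal_multiples[of "e ` H" x F Z, OF B xF]
    show "\<exists>D\<noteq>0. \<forall>z\<in>Z. \<exists>h\<in>H. f h = (\<lambda>n. D * z n)" by (simp add: f_def)
  qed
  moreover have "subgroup (f ` carrier G) Zomega"
    by (rule group_hom.img_is_subgroup[OF group_hom.intro[OF G.is_group Zomega.is_group group_hom_axioms.intro[OF f]]])
  ultimately show ?thesis using f by blast
qed

end
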